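(* Let $G$ be a bipartite graph with no universal vertex, let $B_0\in\mathcal{B}(G)$ and $v\in B_0$, and suppose $B_0-v\in\mathcal{B}(G-v)$. Then: (i) for every $B\in\mathcal{B}(G)$ with $B-v\in\mathcal{B}(G-v)$ such that $(B,B_0)$ is an arc of $\mathbf{H}(G)$, $(B-v,B_0-v)$ is an arc of $\mathbf{H}(G-v)$; (ii) for every $B\in\mathcal{B}(G)$ with $B-v\in\mathcal{B}(G-v)$ such that $(B_0,B)$ is an arc of $\mathbf{H}(G)$, $(B_0-v,B-v)$ is an arc of $\mathbf{H}(G-v)$.
   Context: For a bipartite graph with color classes $X,Y$, a biclique is a vertex set inducing a complete bipartite subgraph with shores $X(B)=B\cap X$, $Y(B)=B\cap Y$; $\mathcal{B}(G)$ is the set of inclusion-wise maximal bicliques, ordered by $B\preceq B'\iff X(B)\subseteq X(B')$. $\mathbf{H}(G)$ is the transitive reduction of $(\mathcal{B}(G),\preceq)$: arc $(B,B')$ iff $B'$ covers $B$. For $v\in B$, $B-v$ denotes the biclique with vertex set $B\setminus\{v\}$; $G-v$ is $G$ with $v$ deleted. A universal vertex is adjacent to all vertices of the opposite color class. *)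

theory Defs
  imports Main
begin

definition bipartite :: "'a set \<Rightarrow> 'a set \<Rightarrow> ('a \<Rightarrow> 'a \<Rightarrow> bool) \<Rightarrow> bool" where
  "bipartite X Y E \<longleftrightarrow> finite X \<and> finite Y \<and> X \<inter> Y = {} \<and>
     (\<forall>a b. E a b \<longrightarrow> E b a) \<and>
     (\<forall>a b. E a b \<longrightarrow> (a \<in> X \<and> b \<in> Y) \<or> (a \<in> Y \<and> b \<in> X))"

definition universal_vertex :: "'a set \<Rightarrow> 'a set \<Rightarrow> ('a \<Rightarrow> 'a \<Rightarrow> bool) \<Rightarrow> 'a \<Rightarrow> bool" where
  "universal_vertex X Y E v \<longleftrightarrow>
     (v \<in> X \<and> (\<forall>y\<in>Y. E v y)) \<or> (v \<in> Y \<and> (\<forall>x\<in>X. E v x))"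

text \<open>Biclique: vertex set inducing a complete bipartite subgraph (shores may be empty).\<close>
definition biclique :: "'a set \<Rightarrow> 'a set \<Rightarrow> ('a \<Rightarrow> 'a \<Rightarrow> bool) \<Rightarrow> 'a set \<Rightarrow> bool" where
  "biclique X Y E B \<longleftrightarrow> B \<subseteq> X \<union> Y \<and> (\<forall>x\<in>B \<inter> X. \<forall>y\<in>B \<inter> Y. E x y)"

definition max_biclique :: "'a set \<Rightarrow> 'a set \<Rightarrow> ('a \<Rightarrow> 'a \<Rightarrow> bool) \<Rightarrow> 'a set \<Rightarrow> bool" where
  "max_biclique X Y E B \<longleftrightarrow> biclique X Y E B \<and>
     (\<forall>B'. biclique X Y E B' \<and> B \<subseteq> B' \<longrightarrow> B' = B)"

definition bc_le :: "'a set \<Rightarrow> 'a set \<Rightarrow> 'a set \<Rightarrow> bool" where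
  "bc_le X B B' \<longleftrightarrow> B \<inter> X \<subseteq> B' \<inter> X"

text \<open>Arcs of \<H>(G) (transitive reduction): B' covers B in (\<B>(G), \<preceq>).\<close>
definition H_arc :: "'a set \<Rightarrow> 'a set \<Rightarrow> ('a \<Rightarrow> 'a \<Rightarrow> bool) \<Rightarrow> 'a set \<Rightarrow> 'a set \<Rightarrow> bool" where
  "H_arc X Y E B B' \<longleftrightarrow> max_biclique X Y E B \<and> max_biclique X Y E B' \<and>
     bc_le X B B' \<and> B \<noteq> B' \<and>
     \<not> (\<exists>C. max_biclique X Y E C \<and> bc_le X B C \<and> B \<noteq> C \<and> bc_le X C B' \<and> C \<noteq> B')"

definition del_edges :: "('a \<Rightarrow> 'a \<Rightarrow> bool) \<Rightarrow> 'a \<Rightarrow> 'a \<Rightarrow> 'a \<Rightarrow> bool" where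
  "del_edges E v a b \<longleftrightarrow> E a b \<and> a \<noteq> v \<and> b \<noteq> v"

end

theory Submission
  imports Defs
begin

text \<open>Deleting v maps maximal bicliques of G to bicliques of G - v, and every maximal biclique
  C' of G - v lifts to a maximal biclique C of G with C - v = C'. If some C' lay strictly
  between B - v and B' - v in H(G - v), its lift would lie strictly between B and B' in H(G):
  the Y-shore of C' is contained in that of B, so when v is in the X-shore of B it extends
  C', and then it lies in C.\<close>

lemma biclique_del_edges_imp_biclique:
  assumes "biclique (X - {v}) (Y - {v}) (del_edges E v) C"
  shows "biclique X Y E C"
  using assms unfolding biclique_def del_edges_def by blast

lemma biclique_minus_vertex:
  assumes "biclique X Y E C"
  shows "biclique (X - {v}) (Y - {v}) (del_edges E v) (C - {v})"
  using assms unfolding biclique_def del_edges_def by blast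

lemma max_biclique_minus_vertex_inj:
  assumes "max_biclique X Y E A" "max_biclique X Y E B" "A - {v} = B - {v}"
  shows "A = B"
proof (cases "v \<in> A \<longleftrightarrow> v \<in> B")
  case True
  with assms(3) show ?thesis by blast
next
  case False
  then have "A \<subseteq> B \<or> B \<subseteq> A" using assms(3) by blast
  with assms(1,2) show ?thesis unfolding max_biclique_def by metis
qed

lemma max_biclique_lift:
  assumes max': "max_biclique (X - {v}) (Y - {v}) (del_edges E v) C'"
  obtains C where "max_biclique X Y E C" "C - {v} = C'"
proof
  define C where "C = (if biclique X Y E (insert v C') then insert v C' else C')"
  have bic': "biclique (X - {v}) (Y - {v}) (del_edges E v) C'"
    using max' unfolding max_biclique_def by simp
  then have "v \<notin> C'" unfolding biclique_def by blast
  then show C_minus: "C - {v} = C'" unfolding C_def by auto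
  have "biclique X Y E C"
    using biclique_del_edges_imp_biclique[OF bic'] unfolding C_def by auto
  moreover have "D = C" if D: "biclique X Y E D" "C \<subseteq> D" for D
  proof -
    have "D - {v} = C'"
      using max' biclique_minus_vertex[OF D(1)] D(2) C_minus unfolding max_biclique_def by blast
    with D show ?thesis unfolding C_def by (cases "v \<in> D") (auto simp: insert_absorb)
  qed
  ultimately show "max_biclique X Y E C" unfolding max_biclique_def by blast
qed

lemma max_biclique_Y_shore_antimono:
  assumes "X \<inter> Y = {}" "max_biclique X Y E B" "biclique X Y E C" "B \<inter> X \<subseteq> C \<inter> X"
  shows "C \<inter> Y \<subseteq> B"
proof -
  have "biclique X Y E (B \<union> C \<inter> Y)"
    using assms unfolding max_biclique_def biclique_def by blast
  with assms(2) have "B \<union> C \<inter> Y = B" unfolding max_biclique_def by (meson Un_upper1)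
  then show ?thesis by blast
qed

lemma biclique_insert_X_vertex:
  assumes "X \<inter> Y = {}" "biclique X Y E C" "v \<in> X" "\<forall>y \<in> C \<inter> Y. E v y"
  shows "biclique X Y E (insert v C)"
  using assms unfolding biclique_def by blast

lemma H_arc_del_vertex:
  assumes bip: "bipartite X Y E"
    and arc: "H_arc X Y E Lo Hi"
    and max_Lo': "max_biclique (X - {v}) (Y - {v}) (del_edges E v) (Lo - {v})"
    and max_Hi': "max_biclique (X - {v}) (Y - {v}) (del_edges E v) (Hi - {v})"
    and v_X_Hi: "v \<in> X \<Longrightarrow> v \<in> Hi"
  shows "H_arc (X - {v}) (Y - {v}) (del_edges E v) (Lo - {v}) (Hi - {v})"
proof -
  have disj: "X \<inter> Y = {}" using bip unfolding bipartite_def by blast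
  have max_Lo: "max_biclique X Y E Lo" and max_Hi: "max_biclique X Y E Hi"
    and le: "bc_le X Lo Hi" and ne: "Lo \<noteq> Hi" using arc unfolding H_arc_def by simp_all
  have "Lo - {v} \<noteq> Hi - {v}" using max_biclique_minus_vertex_inj[OF max_Lo max_Hi] ne by blast
  moreover have "bc_le (X - {v}) (Lo - {v}) (Hi - {v})" using le unfolding bc_le_def by blast
  moreover have False
    if max_C': "max_biclique (X - {v}) (Y - {v}) (del_edges E v) C'"
      and Lo_C': "bc_le (X - {v}) (Lo - {v}) C'" and "Lo - {v} \<noteq> C'"
      and C'_Hi: "bc_le (X - {v}) C' (Hi - {v})" and "C' \<noteq> Hi - {v}" for C'
  proof -
    obtain C where max_C: "max_biclique X Y E C" and C_minus: "C - {v} = C'"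
      using max_biclique_lift[OF max_C'] .
    have bic_del_C': "biclique (X - {v}) (Y - {v}) (del_edges E v) C'"
      using max_C' by (simp add: max_biclique_def)
    then have bic_C': "biclique X Y E C'" by (rule biclique_del_edges_imp_biclique)
    have "v \<notin> C'" using bic_del_C' unfolding biclique_def by blast
    have Lo_C'_X: "(Lo - {v}) \<inter> (X - {v}) \<subseteq> C' \<inter> (X - {v})"
      using Lo_C' unfolding bc_le_def .
    have "v \<in> C" if v: "v \<in> Lo" "v \<in> X"
    proof -
      have "(X - {v}) \<inter> (Y - {v}) = {}" using disj by blast
      from max_biclique_Y_shore_antimono[OF this max_Lo' bic_del_C' Lo_C'_X]
      have "C' \<inter> Y \<subseteq> Lo" using \<open>v \<notin> C'\<close> by blast
      moreover have "biclique X Y E Lo" using max_Lo by (simp add: max_biclique_def)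
      ultimately have "\<forall>y \<in> C' \<inter> Y. E v y" using v unfolding biclique_def by blast
      then have "biclique X Y E (insert v C')"
        using biclique_insert_X_vertex[OF disj bic_C' v(2)] by blast
      moreover have "C \<subseteq> insert v C'" using C_minus by blast
      ultimately have "insert v C' = C" using max_C unfolding max_biclique_def by meson
      then show ?thesis by blast
    qed
    then have "bc_le X Lo C" using Lo_C'_X C_minus unfolding bc_le_def by blast
    moreover have "bc_le X C Hi" using C'_Hi C_minus v_X_Hi unfolding bc_le_def by blast
    moreover have "Lo \<noteq> C" "C \<noteq> Hi" using that C_minus by blast+
    ultimately show False using arc max_C unfolding H_arc_def by blast
  qed
  ultimately show ?thesis unfolding H_arc_def using max_Lo' max_Hi' by blast
qed

theorem lemma4:
  fixes X Y :: "'a set" and E :: "'a \<Rightarrow> 'a \<Rightarrow> bool" and B0 :: "'a set" and v :: 'a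
  assumes "bipartite X Y E"
    and "\<forall>u \<in> X \<union> Y. \<not> universal_vertex X Y E u"
    and "max_biclique X Y E B0"
    and "v \<in> B0"
    and "max_biclique (X - {v}) (Y - {v}) (del_edges E v) (B0 - {v})"
  shows "(\<forall>B. max_biclique X Y E B \<and>
              max_biclique (X - {v}) (Y - {v}) (del_edges E v) (B - {v}) \<and>
              H_arc X Y E B B0 \<longrightarrow>
              H_arc (X - {v}) (Y - {v}) (del_edges E v) (B - {v}) (B0 - {v}))
       \<and> (\<forall>B. max_biclique X Y E B \<and>
              max_biclique (X - {v}) (Y - {v}) (del_edges E v) (B - {v}) \<and>
              H_arc X Y E B0 B \<longrightarrow>
              H_arc (X - {v}) (Y - {v}) (del_edges E v) (B0 - {v}) (B - {v}))"
proof (intro conjI allI impI)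
  fix B
  assume "max_biclique X Y E B \<and> max_biclique (X - {v}) (Y - {v}) (del_edges E v) (B - {v}) \<and>
    H_arc X Y E B B0"
  then show "H_arc (X - {v}) (Y - {v}) (del_edges E v) (B - {v}) (B0 - {v})"
    using H_arc_del_vertex[OF assms(1)] assms(4,5) by blast
next
  fix B
  assume B: "max_biclique X Y E B \<and> max_biclique (X - {v}) (Y - {v}) (del_edges E v) (B - {v}) \<and>
    H_arc X Y E B0 B"
  then have "v \<in> X \<Longrightarrow> v \<in> B" using assms(4) unfolding H_arc_def bc_le_def by blast
  then show "H_arc (X - {v}) (Y - {v}) (del_edges E v) (B0 - {v}) (B - {v})"
    using H_arc_del_vertex[OF assms(1)] B assms(5) by blast
qed

end
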